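(* Let $(H,d)$ be an Hadamard space, i.e. a complete CAT(0) space. Then $\operatorname{Curv} H\leq 0$.
   Context: A CAT(0) space is a geodesic metric space $(X,d)$ such that for every $z\in X$, every geodesic $\gamma\colon[0,1]\to X$ (i.e. $d(\gamma(s),\gamma(t))=d(\gamma(0),\gamma(1))|s-t|$) and every $t\in[0,1]$: $d(z,\gamma(t))^2\le (1-t)d(z,\gamma(0))^2+t\,d(z,\gamma(1))^2-t(1-t)d(\gamma(0),\gamma(1))^2$. For a metric space $(X,d)$, a triangle is a triple $(a_1,a_2,a_3)$ of points of $X$; a comparison triangle is a triple $(\bar a_1,\bar a_2,\bar a_3)$ in the Euclidean plane $\mathbb{R}^2$ with $\|\bar a_i-\bar a_j\|=d(a_i,a_j)$ for all $i,j$ (unique up to isometry). The circumradius of the triangle is $r(a_1,a_2,a_3)=\inf_{x\in X}\max_{i=1,2,3}d(x,a_i)$, and $r(\bar a_1,\bar a_2,\bar a_3)=\min_{x\in\mathbb{R}^2}\max_{i}\|x-\bar a_i\|$. We write $\operatorname{Curv} X\le 0$ if for every triangle $(a_1,a_2,a_3)$ in $X$ one has $r(a_1,a_2,a_3)\le r(\bar a_1,\bar a_2,\bar a_3)$ for a comparison triangle $(\bar a_1,\bar a_2,\bar a_3)$. *)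

theory Defs
  imports "HOL-Analysis.Analysis"
begin

definition is_geodesic :: "(real \<Rightarrow> 'a::metric_space) \<Rightarrow> bool" where
  "is_geodesic g \<longleftrightarrow>
     (\<forall>s\<in>{0..1}. \<forall>t\<in>{0..1}. dist (g s) (g t) = dist (g 0) (g 1) * \<bar>s - t\<bar>)"

definition geodesic_space :: "'a::metric_space itself \<Rightarrow> bool" where
  "geodesic_space _ \<longleftrightarrow>
     (\<forall>x y::'a. \<exists>g. is_geodesic g \<and> g 0 = x \<and> g 1 = y)"

definition CAT0 :: "'a::metric_space itself \<Rightarrow> bool" where
  "CAT0 T \<longleftrightarrow> geodesic_space T \<and>
     (\<forall>(z::'a) g t. is_geodesic g \<and> t \<in> {0..1} \<longrightarrow>
        (dist z (g t))\<^sup>2 \<le> (1 - t) * (dist z (g 0))\<^sup>2 + t * (dist z (g 1))\<^sup>2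
                          - t * (1 - t) * (dist (g 0) (g 1))\<^sup>2)"

definition circumradius :: "'a::metric_space \<Rightarrow> 'a \<Rightarrow> 'a \<Rightarrow> real" where
  "circumradius a1 a2 a3 = (INF x. max (dist x a1) (max (dist x a2) (dist x a3)))"

definition comparison_triangle ::
  "'a::metric_space \<Rightarrow> 'a \<Rightarrow> 'a \<Rightarrow> real^2 \<Rightarrow> real^2 \<Rightarrow> real^2 \<Rightarrow> bool" where
  "comparison_triangle a1 a2 a3 b1 b2 b3 \<longleftrightarrow>
     dist b1 b2 = dist a1 a2 \<and> dist b2 b3 = dist a2 a3 \<and> dist b1 b3 = dist a1 a3"

definition curv_le_0 :: "'a::metric_space itself \<Rightarrow> bool" where
  "curv_le_0 _ \<longleftrightarrow>
     (\<forall>(a1::'a) a2 a3 (b1::real^2) b2 b3.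
        comparison_triangle a1 a2 a3 b1 b2 b3 \<longrightarrow>
        circumradius a1 a2 a3 \<le> circumradius b1 b2 b3)"

end

theory Submission imports Defs begin

text \<open>Let r be the circumradius of a1 a2 a3. The functions d(x, a_i)^2 - r^2 have a nonnegative
  maximum at every x, and by the CAT(0) inequality they are jointly convex along geodesics, so
  separating 0 from the convex set of their strict upper bounds yields barycentric weights l_i
  with r^2 \<le> \<Sum> l_i d(x, a_i)^2 for all x. On the other hand, following two geodesics produces a
  point x with \<Sum> l_i d(x, a_i)^2 \<le> \<Sum>_{i<j} l_i l_j d(a_i, a_j)^2, and in the plane this
  quantity is a lower bound of \<Sum> l_i |y - b_i|^2, hence of the squared circumradius of the
  comparison triangle.\<close>

lemma nonneg_if_affine_nonneg_on_pos:
  fixes a b :: real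
  assumes "\<And>T. T > 0 \<Longrightarrow> 0 \<le> a * T + b"
  shows "0 \<le> a" and "0 \<le> b"
proof -
  show "0 \<le> a"
  proof (rule ccontr)
    assume "\<not> 0 \<le> a"
    define T where "T = (\<bar>b\<bar> + 1) / - a"
    have "T > 0" and "a * T = - (\<bar>b\<bar> + 1)"
      using \<open>\<not> 0 \<le> a\<close> unfolding T_def by (auto simp: field_simps)
    with assms[of T] show False by linarith
  qed
  show "0 \<le> b"
  proof (rule field_le_epsilon)
    fix e :: real assume "0 < e"
    define T where "T = e / (\<bar>a\<bar> + 1)"
    have "T > 0" using \<open>0 < e\<close> unfolding T_def by simp
    have "a * T \<le> \<bar>a\<bar> * T" using \<open>T > 0\<close> by (simp add: mult_right_mono)
    also have "\<dots> \<le> e" using \<open>0 < e\<close> unfolding T_def by (simp add: field_simps)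
    finally show "0 \<le> b + e" using assms[OF \<open>T > 0\<close>] by linarith
  qed
qed

lemma convex_combination_strict_mono:
  fixes x y x' y' u v :: real
  assumes "x < y" "x' < y'" "0 \<le> u" "0 \<le> v" "u + v = 1"
  shows "u * x + v * x' < u * y + v * y'"
proof (cases "u = 0")
  case True
  then show ?thesis using assms by simp
next
  case False
  then have "u * x < u * y" using assms by simp
  moreover have "v * x' \<le> v * y'" using assms by (simp add: mult_left_mono)
  ultimately show ?thesis by linarith
qed

text \<open>A theorem of the alternative (finite minimax): the weights are the normal of a hyperplane
  separating 0 from the convex set of strict upper bounds of the value vectors.\<close>

lemma convexlike_nonneg_convex_combination:
  fixes f1 f2 f3 :: "'a \<Rightarrow> real"
  assumes convexlike: "\<And>x x' u v. 0 \<le> u \<Longrightarrow> 0 \<le> v \<Longrightarrow> u + v = 1 \<Longrightarrow>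
      \<exists>z. f1 z \<le> u * f1 x + v * f1 x' \<and> f2 z \<le> u * f2 x + v * f2 x'
         \<and> f3 z \<le> u * f3 x + v * f3 x'"
    and max_nonneg: "\<And>x. 0 \<le> max (f1 x) (max (f2 x) (f3 x))"
  obtains l1 l2 l3 where "0 \<le> l1" "0 \<le> l2" "0 \<le> l3" "l1 + l2 + l3 = 1"
    and "\<And>x. 0 \<le> l1 * f1 x + l2 * f2 x + l3 * f3 x"
proof -
  define S :: "(real \<times> real \<times> real) set"
    where "S = {(y1, y2, y3). \<exists>x. f1 x < y1 \<and> f2 x < y2 \<and> f3 x < y3}"
  have "convex S"
  proof (rule convexI)
    fix y y' u v assume "y \<in> S" "y' \<in> S" "0 \<le> (u::real)" "0 \<le> v" "u + v = 1"
    obtain y1 y2 y3 x where y: "y = (y1, y2, y3)" "f1 x < y1" "f2 x < y2" "f3 x < y3"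
      using \<open>y \<in> S\<close> unfolding S_def by auto
    obtain y1' y2' y3' x' where y': "y' = (y1', y2', y3')" "f1 x' < y1'" "f2 x' < y2'" "f3 x' < y3'"
      using \<open>y' \<in> S\<close> unfolding S_def by auto
    obtain z where z: "f1 z \<le> u * f1 x + v * f1 x'" "f2 z \<le> u * f2 x + v * f2 x'"
        "f3 z \<le> u * f3 x + v * f3 x'"
      using convexlike \<open>0 \<le> u\<close> \<open>0 \<le> v\<close> \<open>u + v = 1\<close> by blast
    have "f1 z < u * y1 + v * y1'" "f2 z < u * y2 + v * y2'" "f3 z < u * y3 + v * y3'"
      using z y y' convex_combination_strict_mono \<open>0 \<le> u\<close> \<open>0 \<le> v\<close> \<open>u + v = 1\<close>
      by (meson order.strict_trans1)+
    then show "u *\<^sub>R y + v *\<^sub>R y' \<in> S" unfolding S_def y y' by auto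
  qed
  moreover have "0 \<notin> S"
  proof
    assume "0 \<in> S"
    then obtain x where "f1 x < 0" "f2 x < 0" "f3 x < 0" by (auto simp: S_def zero_prod_def)
    with max_nonneg[of x] show False by linarith
  qed
  ultimately obtain w where "w \<noteq> 0" and w: "\<forall>y\<in>S. 0 \<le> inner w y"
    using separating_hyperplane_set_0 by blast
  obtain p q r where pqr: "w = (p, q, r)" by (cases w) auto
  have separated: "0 \<le> p * (f1 x + T1) + q * (f2 x + T2) + r * (f3 x + T3)"
    if "T1 > 0" "T2 > 0" "T3 > 0" for x T1 T2 T3
  proof -
    have "(f1 x + T1, f2 x + T2, f3 x + T3) \<in> S" unfolding S_def using that by (auto intro!: exI[of _ x])
    with w have "0 \<le> inner (p, q, r) (f1 x + T1, f2 x + T2, f3 x + T3)" unfolding pqr by blast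
    then show ?thesis by (simp add: inner_real_def)
  qed
  fix x0
  have "0 \<le> p"
    by (rule nonneg_if_affine_nonneg_on_pos(1)[where b = "p * f1 x0 + q * (f2 x0 + 1) + r * (f3 x0 + 1)"])
      (use separated[of _ 1 1 x0] in \<open>simp add: algebra_simps\<close>)
  moreover have "0 \<le> q"
    by (rule nonneg_if_affine_nonneg_on_pos(1)[where b = "p * (f1 x0 + 1) + q * f2 x0 + r * (f3 x0 + 1)"])
      (use separated[of 1 _ 1 x0] in \<open>simp add: algebra_simps\<close>)
  moreover have "0 \<le> r"
    by (rule nonneg_if_affine_nonneg_on_pos(1)[where b = "p * (f1 x0 + 1) + q * (f2 x0 + 1) + r * f3 x0"])
      (use separated[of 1 1 _ x0] in \<open>simp add: algebra_simps\<close>)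
  moreover have "(p, q, r) \<noteq> 0" using \<open>w \<noteq> 0\<close> pqr by simp
  ultimately have "p + q + r > 0" by (auto simp: zero_prod_def)
  have "0 \<le> p * f1 x + q * f2 x + r * f3 x" for x
    by (rule nonneg_if_affine_nonneg_on_pos(2)[where a = "p + q + r"])
      (use separated[of T T T x for T] in \<open>simp add: algebra_simps\<close>)
  moreover have "(p / (p + q + r)) * f1 x + (q / (p + q + r)) * f2 x + (r / (p + q + r)) * f3 x
      = (p * f1 x + q * f2 x + r * f3 x) / (p + q + r)" for x
    by (simp add: add_divide_distrib)
  ultimately have "0 \<le> (p / (p + q + r)) * f1 x + (q / (p + q + r)) * f2 x + (r / (p + q + r)) * f3 x" for x
    using \<open>p + q + r > 0\<close> by simp
  moreover have "p / (p + q + r) + q / (p + q + r) + r / (p + q + r) = 1"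
    using \<open>p + q + r > 0\<close> by (simp add: add_divide_distrib[symmetric])
  ultimately show thesis
    using that[of "p / (p + q + r)" "q / (p + q + r)" "r / (p + q + r)"]
      \<open>0 \<le> p\<close> \<open>0 \<le> q\<close> \<open>0 \<le> r\<close> by (simp del: times_divide_eq_left)
qed

lemma euclidean_weighted_sq_dist_ge:
  fixes y b1 b2 b3 :: "'b::real_inner"
  assumes "l1 + l2 + l3 = 1"
  shows "l1 * l2 * (dist b1 b2)\<^sup>2 + l1 * l3 * (dist b1 b3)\<^sup>2 + l2 * l3 * (dist b2 b3)\<^sup>2
     \<le> l1 * (dist y b1)\<^sup>2 + l2 * (dist y b2)\<^sup>2 + l3 * (dist y b3)\<^sup>2"
proof -
  define u1 u2 u3 where "u1 = b1 - y" and "u2 = b2 - y" and "u3 = b3 - y"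
  have d: "dist y b1 = norm u1" "dist y b2 = norm u2" "dist y b3 = norm u3"
     "dist b1 b2 = norm (u1 - u2)" "dist b1 b3 = norm (u1 - u3)" "dist b2 b3 = norm (u2 - u3)"
    by (simp_all add: u1_def u2_def u3_def dist_norm norm_minus_commute)
  have l3: "l3 = 1 - l1 - l2" using assms by simp
  \<comment> \<open>the difference of the two sides is the squared norm of the barycentre seen from y\<close>
  have "0 \<le> (norm (l1 *\<^sub>R u1 + l2 *\<^sub>R u2 + l3 *\<^sub>R u3))\<^sup>2" by simp
  also have "\<dots> = (l1 * (dist y b1)\<^sup>2 + l2 * (dist y b2)\<^sup>2 + l3 * (dist y b3)\<^sup>2)
      - (l1 * l2 * (dist b1 b2)\<^sup>2 + l1 * l3 * (dist b1 b3)\<^sup>2 + l2 * l3 * (dist b2 b3)\<^sup>2)"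
    unfolding d power2_norm_eq_inner
    by (simp add: inner_add_left inner_add_right inner_diff_left inner_diff_right inner_commute
        l3 algebra_simps power2_eq_square)
  finally show ?thesis by simp
qed

lemma is_geodesicD:
  "is_geodesic g \<Longrightarrow> s \<in> {0..1} \<Longrightarrow> t \<in> {0..1} \<Longrightarrow>
    dist (g s) (g t) = dist (g 0) (g 1) * \<bar>s - t\<bar>"
  unfolding is_geodesic_def by blast

lemma CAT0_geodesic:
  assumes "CAT0 TYPE('a::metric_space)"
  obtains g where "is_geodesic g" "g 0 = (x::'a)" "g 1 = y"
  using assms unfolding CAT0_def geodesic_space_def by blast

lemma CAT0_inequality:
  assumes "CAT0 TYPE('a::metric_space)" "is_geodesic g" "t \<in> {0..1}"
  shows "(dist (z::'a) (g t))\<^sup>2 \<le> (1 - t) * (dist z (g 0))\<^sup>2 + t * (dist z (g 1))\<^sup>2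
    - t * (1 - t) * (dist (g 0) (g 1))\<^sup>2"
  using assms unfolding CAT0_def by blast

lemma CAT0_dist_sq_convex:
  assumes "CAT0 TYPE('a::metric_space)" "is_geodesic g" "t \<in> {0..1}"
  shows "(dist (z::'a) (g t))\<^sup>2 \<le> (1 - t) * (dist z (g 0))\<^sup>2 + t * (dist z (g 1))\<^sup>2"
proof -
  have "0 \<le> t * (1 - t) * (dist (g 0) (g 1))\<^sup>2" using assms(3) by simp
  with CAT0_inequality[OF assms, of z] show ?thesis by linarith
qed

text \<open>x is the point at parameter l3 on a geodesic from p to a3, where p divides [a1, a2] in the
  ratio l2 : l1; the CAT(0) inequality on both geodesics replays the Euclidean barycentre
  computation.\<close>

lemma CAT0_weighted_sq_dist_le:
  fixes a1 a2 a3 :: "'a::metric_space"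
  assumes cat: "CAT0 TYPE('a)"
    and l: "0 \<le> l1" "0 \<le> l2" "0 \<le> l3" "l1 + l2 + l3 = 1"
  obtains x where "l1 * (dist x a1)\<^sup>2 + l2 * (dist x a2)\<^sup>2 + l3 * (dist x a3)\<^sup>2
     \<le> l1 * l2 * (dist a1 a2)\<^sup>2 + l1 * l3 * (dist a1 a3)\<^sup>2 + l2 * l3 * (dist a2 a3)\<^sup>2"
proof -
  obtain g1 where g1: "is_geodesic g1" "g1 0 = a1" "g1 1 = a2" using CAT0_geodesic[OF cat] .
  define t where "t = l2 / (l1 + l2)"
  have t: "t \<in> {0..1}" using l unfolding t_def by (auto simp: divide_le_eq_1)
  have "(l1 + l2) * t = l2" using l(1,2) unfolding t_def by (cases "l1 + l2 = 0") auto
  moreover have "1 - l3 = l1 + l2" using l(4) by simp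
  ultimately have l12: "l2 = (1 - l3) * t" "l1 = (1 - l3) * (1 - t)"
    by (simp_all add: right_diff_distrib)
  define p where "p = g1 t"
  have dp: "dist a1 p = dist a1 a2 * t" "dist a2 p = dist a1 a2 * (1 - t)"
    using is_geodesicD[OF g1(1), of 0 t] is_geodesicD[OF g1(1), of 1 t] t g1(2,3)
    unfolding p_def by auto
  obtain g2 where g2: "is_geodesic g2" "g2 0 = p" "g2 1 = a3" using CAT0_geodesic[OF cat] .
  have l3: "l3 \<in> {0..1}" using l by auto
  define x where "x = g2 l3"
  have dx3: "dist x a3 = dist p a3 * (1 - l3)"
    using is_geodesicD[OF g2(1) l3, of 1] l3 g2(2,3) unfolding x_def by simp
  have i1: "(dist x a1)\<^sup>2 \<le> (1 - l3) * (dist a1 p)\<^sup>2 + l3 * (dist a1 a3)\<^sup>2 - l3 * (1 - l3) * (dist p a3)\<^sup>2"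
    and i2: "(dist x a2)\<^sup>2 \<le> (1 - l3) * (dist a2 p)\<^sup>2 + l3 * (dist a2 a3)\<^sup>2 - l3 * (1 - l3) * (dist p a3)\<^sup>2"
    using CAT0_inequality[OF cat g2(1) l3, of a1] CAT0_inequality[OF cat g2(1) l3, of a2] g2(2,3)
    unfolding x_def by (simp_all add: dist_commute)
  have "l1 * (dist x a1)\<^sup>2 + l2 * (dist x a2)\<^sup>2 + l3 * (dist x a3)\<^sup>2
     \<le> l1 * ((1 - l3) * (dist a1 p)\<^sup>2 + l3 * (dist a1 a3)\<^sup>2 - l3 * (1 - l3) * (dist p a3)\<^sup>2)
       + l2 * ((1 - l3) * (dist a2 p)\<^sup>2 + l3 * (dist a2 a3)\<^sup>2 - l3 * (1 - l3) * (dist p a3)\<^sup>2)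
       + l3 * (dist x a3)\<^sup>2"
    using mult_left_mono[OF i1 l(1)] mult_left_mono[OF i2 l(2)] by linarith
  also have "\<dots> = l1 * l2 * (dist a1 a2)\<^sup>2 + l1 * l3 * (dist a1 a3)\<^sup>2 + l2 * l3 * (dist a2 a3)\<^sup>2"
    unfolding dp dx3 l12 by (simp add: algebra_simps power2_eq_square)
  finally show ?thesis using that by blast
qed

lemma circumradius_le: "circumradius a1 a2 a3 \<le> max (dist x a1) (max (dist x a2) (dist x a3))"
  unfolding circumradius_def
  by (rule cINF_lower) (auto intro!: bdd_belowI[of _ 0] intro: max.coboundedI1)

lemma circumradius_nonneg: "0 \<le> circumradius a1 a2 a3"
  unfolding circumradius_def by (rule cINF_greatest) (auto intro: max.coboundedI1)

lemma sqrt_le_circumradius: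
  fixes b1 b2 b3 :: "'a::metric_space"
  assumes l: "0 \<le> l1" "0 \<le> l2" "0 \<le> l3" "l1 + l2 + l3 = 1"
    and bound: "\<And>y. c \<le> l1 * (dist y b1)\<^sup>2 + l2 * (dist y b2)\<^sup>2 + l3 * (dist y b3)\<^sup>2"
  shows "sqrt c \<le> circumradius b1 b2 b3"
  unfolding circumradius_def
proof (rule cINF_greatest)
  fix y
  let ?m = "max (dist y b1) (max (dist y b2) (dist y b3))"
  have "c \<le> l1 * (dist y b1)\<^sup>2 + l2 * (dist y b2)\<^sup>2 + l3 * (dist y b3)\<^sup>2" by (rule bound)
  also have "\<dots> \<le> l1 * ?m\<^sup>2 + l2 * ?m\<^sup>2 + l3 * ?m\<^sup>2"
    using l by (intro add_mono mult_left_mono power_mono) auto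
  also have "\<dots> = (l1 + l2 + l3) * ?m\<^sup>2" by (simp add: algebra_simps)
  also have "\<dots> = ?m\<^sup>2" using l(4) by simp
  finally show "sqrt c \<le> ?m" by (rule real_le_lsqrt[rotated]) (auto intro: max.coboundedI1)
qed simp

lemma CAT0_circumradius_weights:
  fixes a1 a2 a3 :: "'a::metric_space"
  assumes cat: "CAT0 TYPE('a)"
  obtains l1 l2 l3 where "0 \<le> l1" "0 \<le> l2" "0 \<le> l3" "l1 + l2 + l3 = 1"
    and "\<And>x. (circumradius a1 a2 a3)\<^sup>2 \<le> l1 * (dist x a1)\<^sup>2 + l2 * (dist x a2)\<^sup>2 + l3 * (dist x a3)\<^sup>2"
proof -
  define r where "r = circumradius a1 a2 a3"
  define f :: "'a \<Rightarrow> 'a \<Rightarrow> real" where "f a x = (dist x a)\<^sup>2 - r\<^sup>2" for a x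
  have convexlike: "\<exists>z. f a1 z \<le> u * f a1 x + v * f a1 x' \<and> f a2 z \<le> u * f a2 x + v * f a2 x'
      \<and> f a3 z \<le> u * f a3 x + v * f a3 x'"
    if "0 \<le> u" "0 \<le> v" "u + v = 1" for x x' u v
  proof -
    obtain g where g: "is_geodesic g" "g 0 = x" "g 1 = x'" using CAT0_geodesic[OF cat] .
    have "f a (g v) \<le> u * f a x + v * f a x'" for a
    proof -
      have "u = 1 - v" using that(3) by simp
      then have "(dist a (g v))\<^sup>2 \<le> u * (dist a x)\<^sup>2 + v * (dist a x')\<^sup>2"
        using CAT0_dist_sq_convex[OF cat g(1), of v a] that(1,2) g(2,3) by simp
      moreover have "u * f a x + v * f a x' = u * (dist x a)\<^sup>2 + v * (dist x' a)\<^sup>2 - (u + v) * r\<^sup>2"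
        unfolding f_def by (simp add: algebra_simps)
      ultimately show ?thesis using that(3) unfolding f_def by (simp add: dist_commute)
    qed
    then show ?thesis by blast
  qed
  have max_nonneg: "0 \<le> max (f a1 x) (max (f a2 x) (f a3 x))" for x
  proof -
    have "r \<le> max (dist x a1) (max (dist x a2) (dist x a3))"
      unfolding r_def by (rule circumradius_le)
    moreover have "0 \<le> r" unfolding r_def by (rule circumradius_nonneg)
    ultimately obtain a where "a \<in> {a1, a2, a3}" "r \<le> dist x a" by (auto simp: le_max_iff_disj)
    with \<open>0 \<le> r\<close> have "0 \<le> f a x" unfolding f_def by (simp add: power_mono)
    with \<open>a \<in> {a1, a2, a3}\<close> show ?thesis by (auto simp: le_max_iff_disj)
  qed
  obtain l1 l2 l3 where l: "0 \<le> l1" "0 \<le> l2" "0 \<le> l3" "l1 + l2 + l3 = 1"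
      and nonneg: "\<And>x. 0 \<le> l1 * f a1 x + l2 * f a2 x + l3 * f a3 x"
    using convexlike_nonneg_convex_combination[of "f a1" "f a2" "f a3", OF convexlike max_nonneg]
    by blast
  have "r\<^sup>2 \<le> l1 * (dist x a1)\<^sup>2 + l2 * (dist x a2)\<^sup>2 + l3 * (dist x a3)\<^sup>2" for x
  proof -
    have "l1 * f a1 x + l2 * f a2 x + l3 * f a3 x
        = l1 * (dist x a1)\<^sup>2 + l2 * (dist x a2)\<^sup>2 + l3 * (dist x a3)\<^sup>2 - (l1 + l2 + l3) * r\<^sup>2"
      unfolding f_def by (simp add: algebra_simps)
    with nonneg[of x] l(4) show ?thesis by simp
  qed
  with l that show ?thesis unfolding r_def by blast
qed

theorem mainTheorem1:
  assumes "CAT0 TYPE('a::{metric_space, complete_space})"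
  shows "curv_le_0 TYPE('a)"
  unfolding curv_le_0_def
proof (intro allI impI)
  fix a1 a2 a3 :: 'a and b1 b2 b3 :: "real^2"
  assume "comparison_triangle a1 a2 a3 b1 b2 b3"
  then have sides: "dist b1 b2 = dist a1 a2" "dist b1 b3 = dist a1 a3" "dist b2 b3 = dist a2 a3"
    unfolding comparison_triangle_def by auto
  obtain l1 l2 l3 where l: "0 \<le> l1" "0 \<le> l2" "0 \<le> l3" "l1 + l2 + l3 = 1"
    and r: "\<And>x. (circumradius a1 a2 a3)\<^sup>2 \<le> l1 * (dist x a1)\<^sup>2 + l2 * (dist x a2)\<^sup>2 + l3 * (dist x a3)\<^sup>2"
    using CAT0_circumradius_weights[OF assms] by blast
  define K where "K = l1 * l2 * (dist a1 a2)\<^sup>2 + l1 * l3 * (dist a1 a3)\<^sup>2 + l2 * l3 * (dist a2 a3)\<^sup>2"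
  obtain x where "l1 * (dist x a1)\<^sup>2 + l2 * (dist x a2)\<^sup>2 + l3 * (dist x a3)\<^sup>2 \<le> K"
    using CAT0_weighted_sq_dist_le[OF assms l] unfolding K_def by blast
  with r[of x] have "circumradius a1 a2 a3 \<le> sqrt K"
    using circumradius_nonneg by (simp add: real_le_rsqrt)
  also have "sqrt K \<le> circumradius b1 b2 b3"
    using l euclidean_weighted_sq_dist_ge[OF l(4), of b1 b2 b3] sides
    unfolding K_def by (intro sqrt_le_circumradius) auto
  finally show "circumradius a1 a2 a3 \<le> circumradius b1 b2 b3" .
qed

end
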